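(* Let $r\neq0$ be an integer and $K$ a field of characteristic not dividing $2r$ and different from $3$, and assume $r=\varepsilon^4$ for some $\varepsilon\in K$. Let $E_r$ be the elliptic curve $y^2=x^3-r^{-1}x$ with point at infinity $O$, and define $S_0=\{(a,b)\in K^2: b^2=a^3-a,\ a^4+6a^2-3=0\}$, $S_1=\{(a,b)\in K^2: b^2=a^3-a,\ 3a^4-6a^2-1=0\}$, $S_{1,r}=\{(a,b)\in K^2: b^2=a^3-r^{-1}a,\ 3r^2a^4-6ra^2-1=0\}$. Then there exist bijections $E_r[3](K)\setminus\{O\}\to S_{1,r}\to S_1\to S_0$, where $E_r[3](K)$ is the set of $K$-rational $3$-torsion points of $E_r$. *)

theory Defs
  imports Main
begin

datatype 'a ec_point = Infinity | Point 'a 'a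

definition on_curve :: "'a::field \<Rightarrow> 'a \<Rightarrow> 'a ec_point \<Rightarrow> bool" where
  "on_curve A B P = (case P of Infinity \<Rightarrow> True
      | Point x y \<Rightarrow> y^2 = x^3 + A * x + B)"

fun ec_add :: "'a::field \<Rightarrow> 'a ec_point \<Rightarrow> 'a ec_point \<Rightarrow> 'a ec_point" where
  "ec_add A Infinity P = P"
| "ec_add A P Infinity = P"
| "ec_add A (Point x1 y1) (Point x2 y2) =
     (if x1 = x2 \<and> y1 = - y2 then Infinity
      else (let l = (if x1 = x2 then (3 * x1^2 + A) / (2 * y1)
                     else (y2 - y1) / (x2 - x1));
                x3 = l^2 - x1 - x2
            in Point x3 (l * (x1 - x3) - y1)))"

definition three_torsion :: "'a::field \<Rightarrow> 'a \<Rightarrow> 'a ec_point set" where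
  "three_torsion A B = {P. on_curve A B P \<and> ec_add A P (ec_add A P P) = Infinity}"

definition S0 :: "('a::field \<times> 'a) set" where
  "S0 = {(a, b). b^2 = a^3 - a \<and> a^4 + 6 * a^2 - 3 = 0}"

definition S1 :: "('a::field \<times> 'a) set" where
  "S1 = {(a, b). b^2 = a^3 - a \<and> 3 * a^4 - 6 * a^2 - 1 = 0}"

definition S1r :: "int \<Rightarrow> ('a::field \<times> 'a) set" where
  "S1r r = {(a, b). b^2 = a^3 - inverse (of_int r) * a \<and>
                    3 * (of_int r)^2 * a^4 - 6 * of_int r * a^2 - 1 = 0}"

end

theory Submission
  imports Defs
begin

text \<open>For P = (x, y) \<noteq> O on y^2 = x^3 + A x + B, 3P = O means 2P = -P, i.e. the
  tangent at P meets the curve again at x-coordinate x: the tangent slope l satisfies l^2 = 3x.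
  Clearing denominators with the curve equation, this says that x is a root of the 3-division
  polynomial 3x^4 + 6Ax^2 + 12Bx - A^2, and for B = 0, A \<noteq> 0 the 2-torsion points (y = 0)
  are not roots. For A = -1/r this quartic, scaled by r^2, is the one defining S_{1,r}; the
  curve isomorphism (x, y) \<mapsto> (\<epsilon>^2 x, \<epsilon>^3 y) carries A = -1/\<epsilon>^4 to A = -1; and
  translation by the 2-torsion point (0, 0) of y^2 = x^3 - x, namely (a, b) \<mapsto> (-1/a, b/a^2),
  turns the quartic 3a^4 - 6a^2 - 1 into its reversal a^4 + 6a^2 - 3.\<close>

definition three_division_points :: "'a::field \<Rightarrow> ('a \<times> 'a) set" where
  "three_division_points A = {(x, y). y^2 = x^3 + A * x \<and> 3 * x^4 + 6 * A * x^2 - A^2 = 0}"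

lemma ec_add_Point_eq_Infinity_iff:
  "ec_add A (Point x y) Q = Infinity \<longleftrightarrow> Q = Point x (- y)"
  by (cases Q) (auto simp: Let_def)

lemma ec_double_Point:
  fixes x y A :: "'a::field"
  assumes "(2::'a) \<noteq> 0" and "y \<noteq> 0"
  shows "ec_add A (Point x y) (Point x y) =
    (let l = (3 * x^2 + A) / (2 * y); x' = l^2 - x - x in Point x' (l * (x - x') - y))"
proof -
  have "y \<noteq> - y"
    using assms by (metis add_eq_0_iff2 divisors_zero mult_2)
  then show ?thesis by (simp add: Let_def)
qed

lemma ec_triple_eq_Infinity_iff:
  fixes x y A B :: "'a::field"
  assumes two: "(2::'a) \<noteq> 0" and "y \<noteq> 0" and curve: "y^2 = x^3 + A * x + B"
  shows "ec_add A (Point x y) (ec_add A (Point x y) (Point x y)) = Infinity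
    \<longleftrightarrow> 3 * x^4 + 6 * A * x^2 + 12 * B * x - A^2 = 0"
proof -
  define l where "l = (3 * x^2 + A) / (2 * y)"
  have four_y2: "4 * y^2 \<noteq> 0"
    using assms by (metis mult_2_right numeral_Bit0 power_not_zero mult_eq_0_iff)
  have "ec_add A (Point x y) (ec_add A (Point x y) (Point x y)) = Infinity \<longleftrightarrow> l^2 - x - x = x"
    using ec_double_Point[OF two \<open>y \<noteq> 0\<close>] by (auto simp: ec_add_Point_eq_Infinity_iff l_def Let_def)
  also have "\<dots> \<longleftrightarrow> (3 * x^2 + A)^2 = 3 * x * (4 * y^2)"
    using four_y2 by (auto simp: l_def power_divide power_mult_distrib divide_eq_eq algebra_simps)
  also have "\<dots> \<longleftrightarrow> 3 * x^4 + 6 * A * x^2 + 12 * B * x - A^2 = 0"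
  proof -
    have "(3 * x^2 + A)^2 - 3 * x * (4 * y^2) = - (3 * x^4 + 6 * A * x^2 + 12 * B * x - A^2)"
      unfolding curve by (simp add: algebra_simps power2_eq_square power3_eq_cube power4_eq_xxxx)
    then show ?thesis by (metis eq_iff_diff_eq_0 neg_equal_0_iff_equal)
  qed
  finally show ?thesis .
qed

lemma three_division_poly_ne_zero_at_root:
  fixes x A :: "'a::field"
  assumes "(2::'a) \<noteq> 0" and "A \<noteq> 0" and root: "x^3 + A * x = 0"
  shows "3 * x^4 + 6 * A * x^2 - A^2 \<noteq> 0"
proof -
  have "x * (x^2 + A) = 0"
    using root by (simp add: algebra_simps power2_eq_square power3_eq_cube)
  then consider "x = 0" | "x^2 = - A"
    by (auto simp: add_eq_0_iff)
  then show ?thesis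
  proof cases
    case 1
    then show ?thesis using \<open>A \<noteq> 0\<close> by simp
  next
    case 2
    have "x^4 = (x^2)^2"
      by (simp flip: power_mult)
    then have "3 * x^4 + 6 * A * x^2 - A^2 = 3 * A^2 + 6 * A * (- A) - A^2"
      by (simp only: 2 power2_minus)
    also have "\<dots> = - ((2 * 2) * A^2)"
      by (simp add: power2_eq_square algebra_simps)
    finally show ?thesis
      using assms by (metis mult_eq_0_iff neg_equal_0_iff_equal power_not_zero)
  qed
qed

lemma Point_in_three_torsion_iff:
  fixes x y A :: "'a::field"
  assumes two: "(2::'a) \<noteq> 0" and "A \<noteq> 0"
  shows "Point x y \<in> three_torsion A 0 \<longleftrightarrow> (x, y) \<in> three_division_points A"
proof (cases "y = 0")
  case True
  then show ?thesis
    using three_division_poly_ne_zero_at_root[OF assms, of x]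
    by (simp add: three_torsion_def three_division_points_def on_curve_def)
next
  case False
  then show ?thesis
    using ec_triple_eq_Infinity_iff[OF two False, of x A 0]
    by (auto simp: three_torsion_def three_division_points_def on_curve_def simp del: ec_add.simps)
qed

lemma bij_betw_three_division_points_three_torsion:
  fixes A :: "'a::field"
  assumes "(2::'a) \<noteq> 0" and "A \<noteq> 0"
  shows "bij_betw (\<lambda>(x, y). Point x y) (three_division_points A) (three_torsion A 0 - {Infinity})"
proof (rule bij_betw_imageI)
  show "inj_on (\<lambda>(x, y). Point x y) (three_division_points A)"
    by (auto intro: inj_onI)
  show "(\<lambda>(x, y). Point x y) ` three_division_points A = three_torsion A 0 - {Infinity}"
  proof (intro set_eqI iffI)
    fix P assume "P \<in> three_torsion A 0 - {Infinity}"
    then obtain x y where "P = Point x y" "Point x y \<in> three_torsion A 0"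
      by (cases P) auto
    then show "P \<in> (\<lambda>(x, y). Point x y) ` three_division_points A"
      using Point_in_three_torsion_iff[OF assms] by force
  qed (use Point_in_three_torsion_iff[OF assms] in auto)
qed

lemma scale_in_three_division_points:
  fixes u :: "'a::field"
  assumes "(x, y) \<in> three_division_points A"
  shows "(u^2 * x, u^3 * y) \<in> three_division_points (u^4 * A)"
proof -
  have "(u^3 * y)^2 = u^6 * y^2" and "(u^2 * x)^3 + u^4 * A * (u^2 * x) = u^6 * (x^3 + A * x)"
    and "3 * (u^2 * x)^4 + 6 * (u^4 * A) * (u^2 * x)^2 - (u^4 * A)^2
           = u^8 * (3 * x^4 + 6 * A * x^2 - A^2)"
    by (simp_all add: algebra_simps power_mult_distrib flip: power_mult power_add)
  then show ?thesis
    using assms by (simp add: three_division_points_def)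
qed

lemma bij_betw_scale_three_division_points:
  fixes u :: "'a::field"
  assumes "u \<noteq> 0"
  shows "bij_betw (\<lambda>(x, y). (u^2 * x, u^3 * y)) (three_division_points A)
    (three_division_points (u^4 * A))"
proof (rule bij_betw_byWitness[where f' = "\<lambda>(x, y). ((inverse u)^2 * x, (inverse u)^3 * y)"])
  have rescale: "(inverse u)^4 * (u^4 * A) = A"
    using assms by (simp add: power_inverse)
  have "((inverse u)^2 * x, (inverse u)^3 * y) \<in> three_division_points A"
    if "(x, y) \<in> three_division_points (u^4 * A)" for x y
    using scale_in_three_division_points[OF that, of "inverse u"] by (simp only: rescale)
  then show "(\<lambda>(x, y). ((inverse u)^2 * x, (inverse u)^3 * y)) ` three_division_points (u^4 * A)
      \<subseteq> three_division_points A"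
    by auto
qed (use assms scale_in_three_division_points in \<open>auto simp: power_inverse\<close>)

lemma S1r_eq_three_division_points:
  assumes "(of_int r :: 'a::field) \<noteq> 0"
  shows "(S1r r :: ('a \<times> 'a) set) = three_division_points (- inverse (of_int r))"
proof -
  have "3 * (of_int r)^2 * a^4 - 6 * of_int r * a^2 - 1
      = (of_int r)^2 * (3 * a^4 + 6 * (- inverse (of_int r)) * a^2 - (- inverse (of_int r))^2)"
    for a :: 'a
    using assms by (simp add: field_simps power2_eq_square)
  then show ?thesis
    using assms by (auto simp: S1r_def three_division_points_def)
qed

lemma S1_eq_three_division_points: "S1 = three_division_points (-1)"
  by (simp add: S1_def three_division_points_def)

definition translate_by_origin :: "'a::field \<times> 'a \<Rightarrow> 'a \<times> 'a" where
  "translate_by_origin = (\<lambda>(a, b). (-1 / a, b / a^2))"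

lemma translate_by_origin_involutive:
  "fst p \<noteq> 0 \<Longrightarrow> translate_by_origin (translate_by_origin p) = p"
  by (cases p) (simp add: translate_by_origin_def power_divide)

lemma translate_by_origin_on_curve:
  fixes a b :: "'a::field"
  assumes "a \<noteq> 0" and "b^2 = a^3 - a"
  shows "(b / a^2)^2 = (-1 / a)^3 - (-1 / a)"
  using assms by (simp add: field_simps power2_eq_square power3_eq_cube power4_eq_xxxx)

lemma translate_by_origin_quartics:
  fixes a :: "'a::field"
  assumes "a \<noteq> 0"
  shows "(-1 / a)^4 + 6 * (-1 / a)^2 - 3 = - (3 * a^4 - 6 * a^2 - 1) / a^4"
    and "3 * (-1 / a)^4 - 6 * (-1 / a)^2 - 1 = - (a^4 + 6 * a^2 - 3) / a^4"
  using assms by (simp_all add: field_simps power2_eq_square power4_eq_xxxx)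

lemma translate_by_origin_S1_S0:
  assumes "(a, b) \<in> (S1 :: ('a::field \<times> 'a) set)"
  shows "translate_by_origin (a, b) \<in> S0"
proof -
  have curve: "b^2 = a^3 - a" and quartic: "3 * a^4 - 6 * a^2 - 1 = 0"
    using assms by (auto simp: S1_def)
  have "a \<noteq> 0"
    using quartic by auto
  then have "(b / a^2)^2 = (-1 / a)^3 - (-1 / a)" and "(-1 / a)^4 + 6 * (-1 / a)^2 - 3 = 0"
    using translate_by_origin_on_curve[OF _ curve]
      translate_by_origin_quartics(1)[OF \<open>a \<noteq> 0\<close>, unfolded quartic]
    by simp_all
  then show ?thesis
    by (simp add: S0_def translate_by_origin_def)
qed

lemma translate_by_origin_S0_S1:
  assumes "(3::'a::field) \<noteq> 0" and "(a, b) \<in> (S0 :: ('a \<times> 'a) set)"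
  shows "translate_by_origin (a, b) \<in> S1"
proof -
  have curve: "b^2 = a^3 - a" and quartic: "a^4 + 6 * a^2 - 3 = 0"
    using assms by (auto simp: S0_def)
  have "a \<noteq> 0"
    using quartic assms(1) by auto
  then have "(b / a^2)^2 = (-1 / a)^3 - (-1 / a)" and "3 * (-1 / a)^4 - 6 * (-1 / a)^2 - 1 = 0"
    using translate_by_origin_on_curve[OF _ curve]
      translate_by_origin_quartics(2)[OF \<open>a \<noteq> 0\<close>, unfolded quartic]
    by simp_all
  then show ?thesis
    by (simp add: S1_def translate_by_origin_def)
qed

lemma bij_betw_S1_S0:
  assumes "(3::'a::field) \<noteq> 0"
  shows "bij_betw translate_by_origin (S1 :: ('a \<times> 'a) set) S0"
proof (rule bij_betw_byWitness[where f' = translate_by_origin])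
  have "fst p \<noteq> 0" if "p \<in> S1 \<union> S0" for p :: "'a \<times> 'a"
    using that assms by (auto simp: S1_def S0_def)
  then show "\<forall>p \<in> (S1 :: ('a \<times> 'a) set). translate_by_origin (translate_by_origin p) = p"
    and "\<forall>p \<in> (S0 :: ('a \<times> 'a) set). translate_by_origin (translate_by_origin p) = p"
    by (simp_all add: translate_by_origin_involutive)
  show "translate_by_origin ` (S1 :: ('a \<times> 'a) set) \<subseteq> S0"
    using translate_by_origin_S1_S0 by auto
  show "translate_by_origin ` (S0 :: ('a \<times> 'a) set) \<subseteq> S1"
    using translate_by_origin_S0_S1[OF assms] by auto
qed

theorem lemma3p10:
  fixes r :: int and \<epsilon> :: "'a::field"
  assumes "r \<noteq> 0"
    and "(of_int (2 * r) :: 'a) \<noteq> 0"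
    and "(3 :: 'a) \<noteq> 0"
    and "(of_int r :: 'a) = \<epsilon> ^ 4"
  shows "\<exists>f g h.
    bij_betw f (three_torsion (- inverse (of_int r :: 'a)) 0 - {Infinity}) (S1r r :: ('a \<times> 'a) set)
    \<and> bij_betw g (S1r r :: ('a \<times> 'a) set) (S1 :: ('a \<times> 'a) set)
    \<and> bij_betw h (S1 :: ('a \<times> 'a) set) (S0 :: ('a \<times> 'a) set)"
proof -
  define A :: 'a where "A = - inverse (of_int r)"
  have two: "(2::'a) \<noteq> 0" and r: "(of_int r :: 'a) \<noteq> 0"
    using assms(2) by auto
  then have "A \<noteq> 0" and "\<epsilon> \<noteq> 0"
    using assms(4) by (auto simp: A_def)
  have S1r: "S1r r = three_division_points A"
    using S1r_eq_three_division_points[OF r] by (simp add: A_def)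
  have "\<epsilon>^4 * A = -1"
    using assms(4) \<open>\<epsilon> \<noteq> 0\<close> by (simp add: A_def)
  then have "bij_betw (\<lambda>(x, y). (\<epsilon>^2 * x, \<epsilon>^3 * y)) (S1r r) S1"
    using bij_betw_scale_three_division_points[OF \<open>\<epsilon> \<noteq> 0\<close>, of A]
    by (simp add: S1r S1_eq_three_division_points)
  moreover have "bij_betw (inv_into (three_division_points A) (\<lambda>(x, y). Point x y))
      (three_torsion A 0 - {Infinity}) (S1r r)"
    unfolding S1r
    by (rule bij_betw_inv_into[OF bij_betw_three_division_points_three_torsion[OF two \<open>A \<noteq> 0\<close>]])
  ultimately show ?thesis
    using bij_betw_S1_S0[OF assms(3)] unfolding A_def by blast
qed

end
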